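(* Let $m\ge 0$ and $n \ge 2m$ be integers. Then for every real $r$ with $|r|>1$, $$\int_{-1}^1 \frac{T_n(s)(1-s^2)^{m-\frac{1}{2}}}{s-r}\,ds = \pi(-1)^{m+1}\frac{|r|}{r}(r^2-1)^{m-\frac{1}{2}}\left(r-\frac{|r|}{r}\sqrt{r^2-1}\right)^n.$$
   Context: $T_k(s)=\cos(k\cos^{-1}s)$ is the Tchebyshev polynomial of the first kind. Since $|r|>1$, the integrand has no singularity in the interior of $(-1,1)$ and the integral is an ordinary (improper at $\pm1$ when $m=0$) integral. *)

theory Defs
  imports "HOL-Analysis.Analysis"
begin

definition cheb_T :: "nat \<Rightarrow> real \<Rightarrow> real" where
  "cheb_T k s = cos (real k * arccos s)"

end

theory Submission
  imports Defs
begin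

(* Write K(n, m) for the integral.  For m = 0, the identity s / (s - r) = 1 + r / (s - r) turns the
   recurrence T(k+2) = 2 s T(k+1) - T(k) into K(k+2, 0) = 2 r K(k+1, 0) - K(k, 0), because
   T(k+1) is orthogonal to 1 for the weight (1 - s^2)^(-1/2).  With K(1, 0) = pi + r K(0, 0) and
   K(0, 0) computed from an arcsin antiderivative, this gives K(n, 0) = K(0, 0) rho^n, where rho is the
   root of rho^2 - 2 r rho + 1 = 0 inside the unit interval.  Raising m by one multiplies the weight by
   1 - s^2, and (1 - s^2) T(k+2) = T(k+2)/2 - T(k+4)/4 - T(k)/4 then multiplies K by
   rho^2/2 - rho^4/4 - 1/4 = -(r^2 - 1) rho^2; peeling off one factor 1 - s^2 costs two degrees,
   hence the hypothesis n >= 2 m. *)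

lemma cheb_T_0 [simp]: "cheb_T 0 s = 1"
  by (simp add: cheb_T_def)

lemma cheb_T_1: "\<bar>s\<bar> \<le> 1 \<Longrightarrow> cheb_T 1 s = s"
  by (simp add: cheb_T_def cos_arccos_abs)

lemma cheb_T_add_2:
  assumes "\<bar>s\<bar> \<le> 1"
  shows "cheb_T (k + 2) s = 2 * s * cheb_T (k + 1) s - cheb_T k s"
proof -
  define \<theta> where "\<theta> = arccos s"
  have "cos \<theta> = s"
    using assms by (simp add: \<theta>_def cos_arccos_abs)
  moreover have "real (k + 2) * \<theta> = real (k + 1) * \<theta> + \<theta>"
    "real k * \<theta> = real (k + 1) * \<theta> - \<theta>"
    by (simp_all add: algebra_simps)
  ultimately show ?thesis
    unfolding cheb_T_def \<theta>_def[symmetric] by (simp add: cos_add cos_diff)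
qed

lemma one_minus_sq_mult_cheb_T:
  assumes "\<bar>s\<bar> \<le> 1"
  shows "(1 - s\<^sup>2) * cheb_T (k + 2) s = cheb_T (k + 2) s / 2 - cheb_T (k + 4) s / 4 - cheb_T k s / 4"
proof -
  have "k + 1 + 1 = k + 2" "k + 1 + 2 = k + 3" "k + 2 + 1 = k + 3" "k + 2 + 2 = k + 4"
    by simp_all
  then have "cheb_T (k + 2) s = 2 * s * cheb_T (k + 1) s - cheb_T k s"
    "cheb_T (k + 3) s = 2 * s * cheb_T (k + 2) s - cheb_T (k + 1) s"
    "cheb_T (k + 4) s = 2 * s * cheb_T (k + 3) s - cheb_T (k + 2) s"
    using cheb_T_add_2[OF assms, of k] cheb_T_add_2[OF assms, of "k + 1"] cheb_T_add_2[OF assms, of "k + 2"]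
    by (simp_all only:)
  then show ?thesis
    by algebra
qed

lemma has_integral_cheb_T_chebyshev_weight:
  "((\<lambda>s. cheb_T k s / sqrt (1 - s\<^sup>2)) has_integral (if k = 0 then pi else 0)) {-1..1}"
proof -
  define F where
    "F = (if k = 0 then (\<lambda>s. - arccos s) else (\<lambda>s. - sin (real k * arccos s) / real k))"
  have "((\<lambda>s. cheb_T k s / sqrt (1 - s\<^sup>2)) has_integral F 1 - F (-1)) {-1..1}"
  proof (rule fundamental_theorem_of_calculus_interior)
    show "continuous_on {-1..1} F"
      unfolding F_def by (auto intro!: continuous_intros)
    fix x :: real assume "x \<in> {-1<..<1}"
    then have "-1 < x" "x < 1" "0 < 1 - x\<^sup>2"
      by (auto simp: abs_square_less_1)
    then show "(F has_vector_derivative cheb_T k x / sqrt (1 - x\<^sup>2)) (at x)"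
      unfolding F_def has_real_derivative_iff_has_vector_derivative[symmetric]
      by (auto intro!: derivative_eq_intros simp: cheb_T_def divide_simps)
  qed simp
  moreover have "F 1 - F (-1) = (if k = 0 then pi else 0)"
    by (simp add: F_def)
  ultimately show ?thesis
    by simp
qed

lemma one_less_sq_of_one_less_abs: "1 < \<bar>x :: real\<bar> \<Longrightarrow> 1 < x\<^sup>2"
  using one_less_power[of "\<bar>x\<bar>" 2] by simp

lemma one_minus_moebius_sq:
  fixes r s :: real
  assumes "r \<noteq> s"
  shows "1 - ((1 - r * s) / (r - s))\<^sup>2 = (r\<^sup>2 - 1) * (1 - s\<^sup>2) / (r - s)\<^sup>2"
proof -
  have "(r - s)\<^sup>2 \<noteq> 0"
    using assms by simp
  then have "1 - ((1 - r * s) / (r - s))\<^sup>2 = ((r - s)\<^sup>2 - (1 - r * s)\<^sup>2) / (r - s)\<^sup>2"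
    by (simp add: power_divide field_simps)
  also have "(r - s)\<^sup>2 - (1 - r * s)\<^sup>2 = (r\<^sup>2 - 1) * (1 - s\<^sup>2)"
    by (simp add: power2_eq_square algebra_simps)
  finally show ?thesis .
qed

lemma abs_moebius_le:
  fixes r s :: real
  assumes "\<bar>r\<bar> > 1" "\<bar>s\<bar> \<le> 1"
  shows "\<bar>(1 - r * s) / (r - s)\<bar> \<le> 1"
proof -
  define u where "u = (1 - r * s) / (r - s)"
  have "0 \<le> 1 - u\<^sup>2"
    unfolding u_def using assms one_less_sq_of_one_less_abs[of r]
    by (simp add: one_minus_moebius_sq abs_square_le_1)
  then show ?thesis
    unfolding u_def[symmetric] by (simp add: abs_square_le_1[symmetric])
qed

lemma abs_moebius_less:
  fixes r s :: real
  assumes "\<bar>r\<bar> > 1" "\<bar>s\<bar> < 1"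
  shows "\<bar>(1 - r * s) / (r - s)\<bar> < 1"
proof -
  define u where "u = (1 - r * s) / (r - s)"
  have "0 < 1 - u\<^sup>2"
    unfolding u_def using assms one_less_sq_of_one_less_abs[of r]
    by (simp add: one_minus_moebius_sq abs_square_less_1)
  then show ?thesis
    unfolding u_def[symmetric] by (simp add: abs_square_less_1[symmetric])
qed

lemma has_real_derivative_arcsin_moebius:
  fixes r x :: real
  assumes r: "\<bar>r\<bar> > 1" and x: "\<bar>x\<bar> < 1"
  shows "((\<lambda>s. arcsin ((1 - r * s) / (r - s))) has_real_derivative
           - sqrt (r\<^sup>2 - 1) / (\<bar>r - x\<bar> * sqrt (1 - x\<^sup>2))) (at x)"
proof -
  define q where "q = sqrt (r\<^sup>2 - 1)"
  have rx: "r - x \<noteq> 0"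
    using r x by auto
  have q: "0 < q" "1 - r\<^sup>2 = - q\<^sup>2"
    using one_less_sq_of_one_less_abs[OF r] by (simp_all add: q_def)
  have "-1 < (1 - r * x) / (r - x)" "(1 - r * x) / (r - x) < 1"
    using abs_moebius_less[OF r x] unfolding abs_less_iff by auto
  moreover have "((\<lambda>s. (1 - r * s) / (r - s)) has_real_derivative (1 - r\<^sup>2) / (r - x)\<^sup>2) (at x)"
    using rx by (auto intro!: derivative_eq_intros simp: field_simps power2_eq_square)
  ultimately have "((\<lambda>s. arcsin ((1 - r * s) / (r - s))) has_real_derivative
      inverse (sqrt (1 - ((1 - r * x) / (r - x))\<^sup>2)) * (- q\<^sup>2 / (r - x)\<^sup>2)) (at x)"
    unfolding q(2) by (rule DERIV_chain2[OF DERIV_arcsin])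
  also have "inverse (sqrt (1 - ((1 - r * x) / (r - x))\<^sup>2)) * (- q\<^sup>2 / (r - x)\<^sup>2)
      = - q / (\<bar>r - x\<bar> * sqrt (1 - x\<^sup>2))"
  proof -
    have sqrt_eq: "sqrt (1 - ((1 - r * x) / (r - x))\<^sup>2) = q * sqrt (1 - x\<^sup>2) / \<bar>r - x\<bar>"
      using rx x by (simp add: one_minus_moebius_sq real_sqrt_divide real_sqrt_mult q_def)
    moreover have "sqrt (1 - x\<^sup>2) \<noteq> 0"
      using x by (simp flip: abs_square_less_1)
    moreover have "inverse (q * S / \<bar>d\<bar>) * (- q\<^sup>2 / d\<^sup>2) = - q / (\<bar>d\<bar> * S)"
      if "d \<noteq> 0" "S \<noteq> 0" for d S :: real
      using that q(1) by (cases "d > 0") (simp_all add: field_simps power2_eq_square)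
    ultimately show ?thesis
      unfolding sqrt_eq using rx by blast
  qed
  finally show ?thesis
    by (simp only: q_def)
qed

lemma has_integral_chebyshev_weight_div:
  fixes r :: real
  assumes r: "\<bar>r\<bar> > 1"
  shows "((\<lambda>s. 1 / sqrt (1 - s\<^sup>2) / (s - r)) has_integral - pi * (\<bar>r\<bar> / r) / sqrt (r\<^sup>2 - 1))
           {-1..1}"
proof -
  define \<sigma> where "\<sigma> = \<bar>r\<bar> / r"
  define q where "q = sqrt (r\<^sup>2 - 1)"
  define F where "F = (\<lambda>s. \<sigma> / q * arcsin ((1 - r * s) / (r - s)))"
  have "((\<lambda>s. 1 / sqrt (1 - s\<^sup>2) / (s - r)) has_integral F 1 - F (-1)) {-1..1}"
  proof (rule fundamental_theorem_of_calculus_interior)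
    show "continuous_on {-1..1} F"
      unfolding F_def using r abs_moebius_le[OF r, unfolded abs_le_iff]
      by (intro continuous_intros) auto
    fix x :: real assume "x \<in> {-1<..<1}"
    then have x: "\<bar>x\<bar> < 1"
      by auto
    have abs_eq: "\<bar>r - x\<bar> = \<sigma> * (r - x)"
      using r x by (auto simp: \<sigma>_def abs_if)
    have "q \<noteq> 0" "sqrt (1 - x\<^sup>2) \<noteq> 0"
      using x one_less_sq_of_one_less_abs[OF r] by (auto simp: q_def simp flip: abs_square_less_1)
    moreover have "\<sigma> \<noteq> 0" "r - x \<noteq> 0"
      using r x by (auto simp: \<sigma>_def)
    ultimately have "\<sigma> / q * (- q / (\<bar>r - x\<bar> * sqrt (1 - x\<^sup>2))) = 1 / sqrt (1 - x\<^sup>2) / (x - r)"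
      unfolding abs_eq by (simp add: field_simps)
    then show "(F has_vector_derivative 1 / sqrt (1 - x\<^sup>2) / (x - r)) (at x)"
      using DERIV_cmult[OF has_real_derivative_arcsin_moebius[OF r x], of "\<sigma> / q"]
      by (simp add: F_def q_def has_real_derivative_iff_has_vector_derivative[symmetric])
  qed simp
  moreover have "F 1 - F (-1) = - pi * \<sigma> / q"
  proof -
    have "(1 - r * 1) / (r - 1) = -1" "(1 - r * -1) / (r - -1) = 1"
      using r by (auto simp: divide_eq_eq)
    then show ?thesis
      unfolding F_def by (simp add: field_simps)
  qed
  ultimately show ?thesis
    by (simp add: \<sigma>_def q_def)
qed

(* The inverse on [-1, 1] of the Joukowski map rho -> (rho + 1/rho) / 2. *)
definition joukowski_inv :: "real \<Rightarrow> real" where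
  "joukowski_inv r = r - (\<bar>r\<bar> / r) * sqrt (r\<^sup>2 - 1)"

lemma joukowski_inv_sq:
  assumes "\<bar>r\<bar> \<ge> 1"
  shows "(joukowski_inv r)\<^sup>2 = 2 * r * joukowski_inv r - 1"
proof -
  have "(\<bar>r\<bar> / r)\<^sup>2 = 1"
    using assms by (simp add: power_divide)
  moreover have "(sqrt (r\<^sup>2 - 1))\<^sup>2 = r\<^sup>2 - 1"
    using assms one_le_power[of "\<bar>r\<bar>" 2] by simp
  ultimately show ?thesis
    unfolding joukowski_inv_def by algebra
qed

lemma has_integral_cheb_T_div_add_2:
  fixes r :: real and w :: "real \<Rightarrow> real"
  assumes "\<bar>r\<bar> > 1"
    and "((\<lambda>s. cheb_T k s * w s / (s - r)) has_integral a) {-1..1}"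
    and "((\<lambda>s. cheb_T (k + 1) s * w s / (s - r)) has_integral b) {-1..1}"
    and "((\<lambda>s. cheb_T (k + 1) s * w s) has_integral c) {-1..1}"
  shows "((\<lambda>s. cheb_T (k + 2) s * w s / (s - r)) has_integral 2 * r * b - a + 2 * c) {-1..1}"
proof -
  have "((\<lambda>s. 2 * r * (cheb_T (k + 1) s * w s / (s - r)) - cheb_T k s * w s / (s - r)
      + 2 * (cheb_T (k + 1) s * w s)) has_integral 2 * r * b - a + 2 * c) {-1..1}"
    using assms(2-4) by (intro has_integral_add has_integral_diff has_integral_mult_right)
  moreover have "2 * r * (cheb_T (k + 1) s * w s / (s - r)) - cheb_T k s * w s / (s - r)
      + 2 * (cheb_T (k + 1) s * w s) = cheb_T (k + 2) s * w s / (s - r)" if "s \<in> {-1..1}" for s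
  proof -
    have recurrence: "cheb_T (k + 2) s = 2 * s * cheb_T (k + 1) s - cheb_T k s"
      using that by (intro cheb_T_add_2) auto
    have "s \<noteq> r"
      using that assms(1) by auto
    then show ?thesis
      unfolding recurrence by (simp add: divide_simps) (simp add: algebra_simps)
  qed
  ultimately show ?thesis
    by (rule has_integral_eq[rotated])
qed

lemma has_integral_cheb_T_chebyshev_weight_div:
  fixes r :: real
  assumes r: "\<bar>r\<bar> > 1"
  shows "((\<lambda>s. cheb_T n s / sqrt (1 - s\<^sup>2) / (s - r)) has_integral
           - pi * (\<bar>r\<bar> / r) / sqrt (r\<^sup>2 - 1) * joukowski_inv r ^ n) {-1..1}"
proof -
  define C where "C = - pi * (\<bar>r\<bar> / r) / sqrt (r\<^sup>2 - 1)"
  define \<rho> where "\<rho> = joukowski_inv r"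
  define w :: "real \<Rightarrow> real" where "w s = 1 / sqrt (1 - s\<^sup>2)" for s
  have weight: "((\<lambda>s. cheb_T k s * w s) has_integral (if k = 0 then pi else 0)) {-1..1}" for k
    using has_integral_cheb_T_chebyshev_weight[of k] by (simp add: w_def)
  have int_0: "((\<lambda>s. cheb_T 0 s * w s / (s - r)) has_integral C) {-1..1}"
    using has_integral_chebyshev_weight_div[OF r] by (simp add: w_def C_def)
  have "((\<lambda>s. cheb_T n s * w s / (s - r)) has_integral C * \<rho> ^ n) {-1..1}"
  proof (induction n rule: induct_nat_012)
    case 0
    show ?case
      using int_0 by simp
  next
    case 1
    have "C * \<rho> = pi + r * C"
      using r one_less_sq_of_one_less_abs[OF r]
      by (simp add: C_def \<rho>_def joukowski_inv_def field_simps)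
    moreover have "cheb_T 1 s * w s / (s - r) = cheb_T 0 s * w s + r * (cheb_T 0 s * w s / (s - r))"
      if "s \<in> {-1..1}" for s
    proof -
      have "cheb_T 1 s = s"
        using that by (intro cheb_T_1) auto
      moreover have "s \<noteq> r"
        using that r by auto
      ultimately show ?thesis
        by (simp add: field_simps)
    qed
    ultimately show ?case
      using has_integral_eq[OF _ has_integral_add[OF weight[of 0] has_integral_mult_right[OF int_0]]] by simp
  next
    case (ge2 k)
    have "C * \<rho> ^ (k + 2) = C * \<rho> ^ k * \<rho>\<^sup>2"
      by (simp only: power_add mult.assoc)
    also have "\<rho>\<^sup>2 = 2 * r * \<rho> - 1"
      using r by (simp add: \<rho>_def joukowski_inv_sq)
    also have "C * \<rho> ^ k * (2 * r * \<rho> - 1) = 2 * r * (C * \<rho> ^ (k + 1)) - C * \<rho> ^ k + 2 * 0"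
      by (simp add: algebra_simps)
    finally show ?case
      using has_integral_cheb_T_div_add_2[OF r ge2(1) _ weight[of "k + 1"]] ge2(2) by simp
  qed
  then show ?thesis
    by (simp add: w_def C_def \<rho>_def)
qed

lemma has_integral_cheb_T_mult_one_minus_sq:
  fixes g :: "real \<Rightarrow> real"
  assumes \<rho>: "\<rho>\<^sup>2 = 2 * r * \<rho> - 1"
    and int: "\<And>j. j \<in> {k, k + 2, k + 4} \<Longrightarrow>
      ((\<lambda>s. cheb_T j s * g s) has_integral E * \<rho> ^ j) {-1..1}"
  shows "((\<lambda>s. cheb_T (k + 2) s * ((1 - s\<^sup>2) * g s)) has_integral
           - (r\<^sup>2 - 1) * E * \<rho> ^ (k + 2)) {-1..1}"
proof -
  have integral: "((\<lambda>s. cheb_T (k + 2) s * g s / 2 - cheb_T (k + 4) s * g s / 4 - cheb_T k s * g s / 4)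
      has_integral
      E * \<rho> ^ (k + 2) / 2 - E * \<rho> ^ (k + 4) / 4 - E * \<rho> ^ k / 4) {-1..1}"
    by (intro has_integral_diff has_integral_divide int) auto
  have integrand: "cheb_T (k + 2) s * g s / 2 - cheb_T (k + 4) s * g s / 4 - cheb_T k s * g s / 4
      = cheb_T (k + 2) s * ((1 - s\<^sup>2) * g s)" if "s \<in> {-1..1}" for s
  proof -
    have "(1 - s\<^sup>2) * cheb_T (k + 2) s = cheb_T (k + 2) s / 2 - cheb_T (k + 4) s / 4 - cheb_T k s / 4"
      using that by (intro one_minus_sq_mult_cheb_T) auto
    then show ?thesis
      by algebra
  qed
  have "E * \<rho> ^ (k + 2) / 2 - E * \<rho> ^ (k + 4) / 4 - E * \<rho> ^ k / 4
      = E * \<rho> ^ k * (\<rho>\<^sup>2 / 2 - \<rho> ^ 4 / 4 - 1 / 4)"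
    by (simp add: power_add field_simps power2_eq_square)
  also have "\<rho>\<^sup>2 / 2 - \<rho> ^ 4 / 4 - 1 / 4 = - (r\<^sup>2 - 1) * \<rho>\<^sup>2"
    using \<rho> by algebra
  also have "E * \<rho> ^ k * (- (r\<^sup>2 - 1) * \<rho>\<^sup>2) = - (r\<^sup>2 - 1) * E * \<rho> ^ (k + 2)"
    by (simp only: power_add mult_ac)
  finally show ?thesis
    using has_integral_eq[OF integrand integral] by simp
qed

lemma has_integral_cheb_T_powr_weight_div:
  fixes r :: real
  assumes r: "\<bar>r\<bar> > 1" and "n \<ge> 2 * m"
  shows "((\<lambda>s. cheb_T n s * (1 - s\<^sup>2) powr (real m - 1/2) / (s - r)) has_integral
           - pi * (\<bar>r\<bar> / r) / sqrt (r\<^sup>2 - 1) * (1 - r\<^sup>2) ^ m * joukowski_inv r ^ n) {-1..1}"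
  using assms(2)
proof (induction m arbitrary: n)
  case 0
  \<comment> \<open>At s = \<plusminus>1 both sides are 0, since 1 / 0 = 0 and 0 powr a = 0.\<close>
  have "cheb_T n s / sqrt (1 - s\<^sup>2) / (s - r) = cheb_T n s * (1 - s\<^sup>2) powr (real 0 - 1/2) / (s - r)"
    if "s \<in> {-1..1}" for s
  proof -
    have "0 \<le> 1 - s\<^sup>2"
      using that by (simp add: abs_square_le_1 abs_le_iff)
    then have "(1 - s\<^sup>2) powr (real 0 - 1/2) = 1 / sqrt (1 - s\<^sup>2)"
      by (simp add: powr_minus_divide powr_half_sqrt)
    then show ?thesis
      by simp
  qed
  from has_integral_eq[OF this has_integral_cheb_T_chebyshev_weight_div[OF r]] show ?case
    by (simp only: power_0 mult_1_right)
next
  case (Suc m)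
  define C where "C = - pi * (\<bar>r\<bar> / r) / sqrt (r\<^sup>2 - 1) * (1 - r\<^sup>2) ^ m"
  define g where "g s = (1 - s\<^sup>2) powr (real m - 1/2) / (s - r)" for s
  define k where "k = n - 2"
  have n: "n = k + 2" and k: "k \<ge> 2 * m"
    using Suc.prems by (simp_all add: k_def)
  have integral: "((\<lambda>s. cheb_T (k + 2) s * ((1 - s\<^sup>2) * g s)) has_integral
      - (r\<^sup>2 - 1) * C * joukowski_inv r ^ (k + 2)) {-1..1}"
  proof (rule has_integral_cheb_T_mult_one_minus_sq)
    show "(joukowski_inv r)\<^sup>2 = 2 * r * joukowski_inv r - 1"
      using r by (simp add: joukowski_inv_sq)
    show "((\<lambda>s. cheb_T j s * g s) has_integral C * joukowski_inv r ^ j) {-1..1}"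
      if "j \<in> {k, k + 2, k + 4}" for j
    proof -
      have "2 * m \<le> j"
        using that k by auto
      from Suc.IH[OF this] show ?thesis
        by (simp only: g_def C_def times_divide_eq_right)
    qed
  qed
  have integrand: "cheb_T (k + 2) s * ((1 - s\<^sup>2) * g s)
      = cheb_T (k + 2) s * (1 - s\<^sup>2) powr (real (Suc m) - 1/2) / (s - r)" if "s \<in> {-1..1}" for s
  proof -
    have "0 \<le> 1 - s\<^sup>2"
      using that by (simp add: abs_square_le_1 abs_le_iff)
    then have "(1 - s\<^sup>2) * (1 - s\<^sup>2) powr (real m - 1/2) = (1 - s\<^sup>2) powr (real (Suc m) - 1/2)"
      by (simp add: powr_mult_base)
    then show ?thesis
      by (simp only: g_def times_divide_eq_right)
  qed
  have coefficient: "- (r\<^sup>2 - 1) * C = - pi * (\<bar>r\<bar> / r) / sqrt (r\<^sup>2 - 1) * (1 - r\<^sup>2) ^ Suc m"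
    by (simp add: C_def)
  show ?case
    using has_integral_eq[OF integrand integral] unfolding coefficient n .
qed

theorem mainTheorem9:
  fixes m n :: nat and r :: real
  assumes "n \<ge> 2 * m" and "\<bar>r\<bar> > 1"
  shows "((\<lambda>s. cheb_T n s * (1 - s\<^sup>2) powr (real m - 1/2) / (s - r)) has_integral
          (pi * (-1) ^ (m + 1) * (\<bar>r\<bar> / r) * (r\<^sup>2 - 1) powr (real m - 1/2)
             * (r - (\<bar>r\<bar> / r) * sqrt (r\<^sup>2 - 1)) ^ n)) {-1..1}"
proof -
  have "r\<^sup>2 - 1 > 0"
    using one_less_sq_of_one_less_abs[OF assms(2)] by simp
  then have "(r\<^sup>2 - 1) powr (real m - 1/2) = (r\<^sup>2 - 1) ^ m / sqrt (r\<^sup>2 - 1)"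
    by (simp add: powr_diff powr_realpow powr_half_sqrt)
  moreover have "(1 - r\<^sup>2) ^ m = (-1) ^ m * (r\<^sup>2 - 1) ^ m"
    by (simp flip: power_mult_distrib)
  ultimately have "- pi * (\<bar>r\<bar> / r) / sqrt (r\<^sup>2 - 1) * (1 - r\<^sup>2) ^ m
      = pi * (-1) ^ (m + 1) * (\<bar>r\<bar> / r) * (r\<^sup>2 - 1) powr (real m - 1/2)"
    by simp
  with has_integral_cheb_T_powr_weight_div[OF assms(2,1)] show ?thesis
    by (simp only: joukowski_inv_def)
qed

end
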